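(* Let $\Bbbk$ be a field of characteristic zero, let $n \geq 5$ be odd and $S=\Bbbk[x_1,\ldots,x_n]$. If $I\subset S$ is an artinian ideal minimally generated by $n+2$ quadratic monomials, then $S/I$ has the WLP.
   Context: A standard graded artinian algebra $A=\bigoplus_i A_i$ has the WLP if there is a linear form $\ell$ such that $\times\ell:A_k\to A_{k+1}$ has maximal rank (is injective or surjective) for every $k$; for monomial quotients $S/I$ this is equivalent to taking $\ell=x_1+\cdots+x_n$. *)

theory Defs
  imports Main
begin

text \<open>Monomials in S = k[x_0,...,x_(n-1)] are exponent vectors a :: nat => nat
  with a i = 0 for i >= n.  A monomial ideal is given by a finite set G of
  monomial generators.  The quotient A = S/I has as k-basis the monomials not in I
  (standard monomials); an element of A_d is a coefficient function on the
  standard monomials of degree d.\<close>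

type_synonym monomial = "nat \<Rightarrow> nat"

definition is_mon :: "nat \<Rightarrow> monomial \<Rightarrow> bool" where
  "is_mon n a \<longleftrightarrow> (\<forall>i\<ge>n. a i = 0)"

definition mon_deg :: "nat \<Rightarrow> monomial \<Rightarrow> nat" where
  "mon_deg n a = (\<Sum>i<n. a i)"

definition mon_dvd :: "monomial \<Rightarrow> monomial \<Rightarrow> bool" where
  "mon_dvd a b \<longleftrightarrow> (\<forall>i. a i \<le> b i)"

definition in_mon_ideal :: "monomial set \<Rightarrow> monomial \<Rightarrow> bool" where
  "in_mon_ideal G a \<longleftrightarrow> (\<exists>g\<in>G. mon_dvd g a)"

definition artinian_mon :: "nat \<Rightarrow> monomial set \<Rightarrow> bool" where
  "artinian_mon n G \<longleftrightarrow> (\<forall>i<n. \<exists>k. in_mon_ideal G ((\<lambda>_. 0)(i := k)))"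

definition std :: "nat \<Rightarrow> monomial set \<Rightarrow> nat \<Rightarrow> monomial set" where
  "std n G d = {a. is_mon n a \<and> mon_deg n a = d \<and> \<not> in_mon_ideal G a}"

definition graded_piece :: "nat \<Rightarrow> monomial set \<Rightarrow> nat \<Rightarrow> (monomial \<Rightarrow> 'k::field) set" where
  "graded_piece n G d = {f. \<forall>a. a \<notin> std n G d \<longrightarrow> f a = 0}"

text \<open>Multiplication by the linear form l = sum_i c i * x_i, as a map A_d -> A_(d+1).\<close>
definition mult_lin :: "nat \<Rightarrow> monomial set \<Rightarrow> (nat \<Rightarrow> 'k::field) \<Rightarrow> nat
    \<Rightarrow> (monomial \<Rightarrow> 'k) \<Rightarrow> (monomial \<Rightarrow> 'k)" where
  "mult_lin n G c d f = (\<lambda>b. if b \<in> std n G (Suc d) then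
      (\<Sum>i<n. if 1 \<le> b i \<and> b(i := b i - 1) \<in> std n G d
               then c i * f (b(i := b i - 1)) else 0)
    else 0)"

definition max_rank_at :: "nat \<Rightarrow> monomial set \<Rightarrow> (nat \<Rightarrow> 'k::field) \<Rightarrow> nat \<Rightarrow> bool" where
  "max_rank_at n G c d \<longleftrightarrow>
     inj_on (mult_lin n G c d) (graded_piece n G d) \<or>
     mult_lin n G c d ` graded_piece n G d = graded_piece n G (Suc d)"

definition has_WLP :: "'k::field itself \<Rightarrow> nat \<Rightarrow> monomial set \<Rightarrow> bool" where
  "has_WLP _ n G \<longleftrightarrow> (\<exists>c :: nat \<Rightarrow> 'k. \<forall>d. max_rank_at n G c d)"

end

(*
  Since I is artinian and generated by quadrics, it contains all n squares x_i^2, and the two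
  remaining generators are squarefree products x_p x_q and x_p' x_q', i.e. two edges of a graph
  on the variables; the standard monomials of S/I are the independent sets of this graph.
  Choose a set Z of variables meeting both edges (the second endpoints if the edges are disjoint,
  the common vertex otherwise) and let l be the sum of the variables outside Z. Multiplication
  by l ("raise") and its adjoint ("lower") behave like an sl2-pair: their commutator acts on each
  standard monomial by an integer weight, and raise lowers weights by 2. As for representations
  of sl2, in characteristic zero raise is injective on vectors of positive weight and maps onto
  the vectors of negative weight. Counting shows that a standard monomial of degree d has weight
  between n - 2 - 2d and n - 2d, so for odd n all weights in degree d are positive when
  2d + 3 <= n, and all weights in degree d + 1 are negative otherwise.
*)
theory Submission
  imports Defs
begin

lemma mon_deg_fun_upd:
  assumes "j < n"
  shows "mon_deg n (a(j := v)) + a j = mon_deg n a + v"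
proof -
  have "mon_deg n (a(j := v)) = v + (\<Sum>i\<in>{..<n} - {j}. a i)"
    unfolding mon_deg_def using assms by (simp add: sum.remove)
  moreover have "mon_deg n a = a j + (\<Sum>i\<in>{..<n} - {j}. a i)"
    unfolding mon_deg_def using assms by (simp add: sum.remove)
  ultimately show ?thesis by simp
qed

lemma in_mon_ideal_mono: "in_mon_ideal G b \<Longrightarrow> (\<And>i. b i \<le> a i) \<Longrightarrow> in_mon_ideal G a"
  unfolding in_mon_ideal_def mon_dvd_def by (meson order_trans)

lemma std_var_lt: "a \<in> std n G d \<Longrightarrow> a j \<noteq> 0 \<Longrightarrow> j < n"
  unfolding std_def is_mon_def by (metis (mono_tags, lifting) mem_Collect_eq not_le)

lemma std_degree_zero:
  assumes "a \<in> std n G 0" shows "a j = 0"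
proof (cases "j < n")
  case True
  have "(\<Sum>i<n. a i) = 0" using assms unfolding std_def mon_deg_def by simp
  then show ?thesis using True by simp
next
  case False
  then show ?thesis using assms unfolding std_def is_mon_def by simp
qed

lemma std_remove_var:
  assumes a: "a \<in> std n G (Suc d)" and aj: "a j = 1"
  shows "a(j := 0) \<in> std n G d"
proof -
  have "j < n" using std_var_lt[OF a] aj by simp
  then have "mon_deg n (a(j := 0)) = d"
    using mon_deg_fun_upd[of j n a 0] a aj unfolding std_def by simp
  moreover have "\<not> in_mon_ideal G (a(j := 0))"
  proof
    assume "in_mon_ideal G (a(j := 0))"
    then have "in_mon_ideal G a" by (rule in_mon_ideal_mono) simp
    then show False using a unfolding std_def by simp
  qed
  ultimately show ?thesis using a unfolding std_def is_mon_def by simp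
qed

lemma sum_lessThan_pick:
  fixes F :: "nat \<Rightarrow> 'a::comm_monoid_add"
  assumes "i < n"
  shows "(\<Sum>j<n. F j) = F i + (\<Sum>j<n. if j = i then 0 else F j)"
proof -
  have "(\<Sum>j<n. F j) = (\<Sum>j<n. (if j = i then F j else 0) + (if j = i then 0 else F j))"
    by (rule sum.cong) auto
  also have "\<dots> = (\<Sum>j<n. if j = i then F j else 0) + (\<Sum>j<n. if j = i then 0 else F j)"
    by (rule sum.distrib)
  finally show ?thesis using assms by simp
qed

lemma mult_lin_in_graded_piece: "mult_lin n G c d f \<in> graded_piece n G (Suc d)"
  unfolding mult_lin_def graded_piece_def by auto

lemma mult_lin_zero: "mult_lin n G c d (\<lambda>_. 0) = (\<lambda>_. 0)"
  unfolding mult_lin_def by (rule ext) (simp add: sum.neutral)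

lemma mult_lin_add:
  "mult_lin n G c d (\<lambda>x. f x + g x) = (\<lambda>x. mult_lin n G c d f x + mult_lin n G c d g x)"
  unfolding mult_lin_def by (rule ext) (auto simp: sum.distrib[symmetric] algebra_simps intro!: sum.cong)

lemma mult_lin_scale:
  "mult_lin n G c d (\<lambda>x. r * f x) = (\<lambda>x. r * mult_lin n G c d f x)"
  unfolding mult_lin_def by (rule ext) (auto simp: sum_distrib_left algebra_simps intro!: sum.cong)

lemma mult_lin_diff:
  "mult_lin n G c d (\<lambda>x. f x - g x) = (\<lambda>x. mult_lin n G c d f x - mult_lin n G c d g x)"
  using mult_lin_add[of n G c d f "\<lambda>x. - 1 * g x"] mult_lin_scale[of n G c d "- 1" g] by simp

lemma mult_lin_sum:
  assumes "finite V"
  shows "mult_lin n G c d (\<lambda>x. \<Sum>v\<in>V. F v x) = (\<lambda>y. \<Sum>v\<in>V. mult_lin n G c d (F v) y)"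
  using assms by (induction V rule: finite_induct) (simp_all add: mult_lin_zero mult_lin_add)

section \<open>An sl2-pair on squarefree quotients\<close>

locale squarefree_exchange =
  fixes n :: nat and G :: "monomial set" and Z :: "nat set"
  assumes std_squarefree: "a \<in> std n G d \<Longrightarrow> a i \<le> 1"
    and std_exchange: "\<lbrakk>a \<in> std n G d; a i = 0; a j = 1; i \<noteq> j; i \<notin> Z; j \<notin> Z; i < n;
      (a(j := 0))(i := 1) \<in> std n G d\<rbrakk> \<Longrightarrow> a(i := 1) \<in> std n G (Suc d)"
begin

lemma std_nonzero_eq_one: "a \<in> std n G d \<Longrightarrow> a i \<noteq> 0 \<Longrightarrow> a i = 1"
  using std_squarefree[of a d i] by simp

lemma finite_std: "finite (std n G d)"
proof (rule finite_subset)
  show "std n G d \<subseteq> {a. \<forall>i. (i \<in> {..<n} \<longrightarrow> a i \<in> {0, 1}) \<and> (i \<notin> {..<n} \<longrightarrow> a i = 0)}"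
    using std_nonzero_eq_one unfolding std_def is_mon_def by fastforce
  show "finite {a::monomial. \<forall>i. (i \<in> {..<n} \<longrightarrow> a i \<in> {0, 1}) \<and> (i \<notin> {..<n} \<longrightarrow> a i = 0)}"
    by (rule finite_set_of_finite_funs) auto
qed

lemma std_empty_above: "n < d \<Longrightarrow> std n G d = {}"
proof (rule ccontr)
  assume "n < d" "std n G d \<noteq> {}"
  then obtain a where a: "a \<in> std n G d" by auto
  have "d = (\<Sum>i<n. a i)" using a unfolding std_def mon_deg_def by simp
  also have "\<dots> \<le> (\<Sum>i<n. 1)" by (rule sum_mono) (use std_squarefree[OF a] in auto)
  finally show False using \<open>n < d\<close> by simp
qed

definition lform :: "nat \<Rightarrow> 'k::field" where
  "lform i = (if i \<in> Z then 0 else 1)"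

abbreviation raise :: "nat \<Rightarrow> (monomial \<Rightarrow> 'k::field) \<Rightarrow> monomial \<Rightarrow> 'k" where
  "raise \<equiv> mult_lin n G lform"

text \<open>The adjoint of \<^const>\<open>raise\<close> with respect to the basis of standard monomials.\<close>
definition lower :: "nat \<Rightarrow> (monomial \<Rightarrow> 'k::field) \<Rightarrow> monomial \<Rightarrow> 'k" where
  "lower e g = (\<lambda>a. if 0 < e \<and> a \<in> std n G (e - 1) then
     (\<Sum>i<n. if a i = 0 \<and> a(i := 1) \<in> std n G e then lform i * g (a(i := 1)) else 0) else 0)"

definition addable :: "monomial \<Rightarrow> nat set" where
  "addable a = {i. i < n \<and> i \<notin> Z \<and> a i = 0 \<and> a(i := 1) \<in> std n G (Suc (mon_deg n a))}"

definition removable :: "monomial \<Rightarrow> nat set" where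
  "removable a = {i. i < n \<and> i \<notin> Z \<and> a i = 1}"

definition weight :: "monomial \<Rightarrow> int" where
  "weight a = int (card (addable a)) - int (card (removable a))"

lemma weight_remove_var:
  assumes b: "b \<in> std n G (Suc d)" and bj: "b j = 1" and jZ: "j \<notin> Z"
  shows "weight (b(j := 0)) = weight b + 2"
proof -
  have j: "j < n" using std_var_lt[OF b] bj by simp
  have deg_b: "mon_deg n b = Suc d" using b unfolding std_def by simp
  have deg_bj: "mon_deg n (b(j := 0)) = d" using std_remove_var[OF b bj] unfolding std_def by simp
  have "addable (b(j := 0)) = insert j (addable b)"
  proof (intro set_eqI iffI)
    fix i assume "i \<in> addable (b(j := 0))"
    then have i: "i < n" "i \<notin> Z" "(b(j := 0)) i = 0" "(b(j := 0))(i := 1) \<in> std n G (Suc d)"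
      unfolding addable_def deg_bj by auto
    show "i \<in> insert j (addable b)"
    proof (cases "i = j")
      case False
      then have "b i = 0" using i by simp
      moreover have "b(i := 1) \<in> std n G (Suc (Suc d))"
        using std_exchange[OF b \<open>b i = 0\<close> bj False i(2) jZ i(1)] i(4) False
        by (simp add: fun_upd_twist)
      ultimately show ?thesis using i deg_b unfolding addable_def by simp
    qed simp
  next
    fix i assume i: "i \<in> insert j (addable b)"
    show "i \<in> addable (b(j := 0))"
    proof (cases "i = j")
      case True
      then show ?thesis using j jZ b bj deg_bj unfolding addable_def by (simp add: fun_upd_idem)
    next
      case False
      then have i: "i < n" "i \<notin> Z" "b i = 0" "b(i := 1) \<in> std n G (Suc (Suc d))"
        using i deg_b unfolding addable_def by auto
      have "(b(i := 1))(j := 0) \<in> std n G (Suc d)" using std_remove_var[OF i(4)] False bj by simp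
      then show ?thesis using i False deg_bj unfolding addable_def by (simp add: fun_upd_twist)
    qed
  qed
  moreover have "removable (b(j := 0)) = removable b - {j}"
    unfolding removable_def by auto
  moreover have "j \<notin> addable b" "j \<in> removable b"
    unfolding addable_def removable_def using bj j jZ by auto
  moreover have "finite (addable b)" "finite (removable b)"
    unfolding addable_def removable_def by auto
  moreover have "card (removable b) > 0"
    using \<open>j \<in> removable b\<close> \<open>finite (removable b)\<close> card_gt_0_iff by blast
  ultimately show ?thesis
    unfolding weight_def by (simp add: of_nat_diff)
qed

lemma lform_sq: "lform i * lform i = (of_bool (i \<notin> Z) :: 'k::field)"
  unfolding lform_def by simp

lemma raise_at_add_var:
  assumes a: "a \<in> std n G d" and ai: "a i = 0" and i: "i < n" and b: "a(i := 1) \<in> std n G (Suc d)"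
  shows "raise d f (a(i := 1)) = lform i * f a +
    (\<Sum>j<n. if j \<noteq> i \<and> a j = 1 then lform j * f ((a(i := 1))(j := 0)) else 0)"
proof -
  let ?b = "a(i := 1)"
  let ?F = "\<lambda>j. if 1 \<le> ?b j \<and> ?b(j := ?b j - 1) \<in> std n G d then lform j * f (?b(j := ?b j - 1)) else 0"
  have "raise d f ?b = (\<Sum>j<n. ?F j)"
    unfolding mult_lin_def using b by simp
  also have "\<dots> = ?F i + (\<Sum>j<n. if j = i then 0 else ?F j)"
    by (rule sum_lessThan_pick[OF i])
  also have "?F i = lform i * f a"
    using a ai by (simp add: fun_upd_idem)
  also have "(\<Sum>j<n. if j = i then 0 else ?F j) =
      (\<Sum>j<n. if j \<noteq> i \<and> a j = 1 then lform j * f (?b(j := 0)) else 0)"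
  proof (rule sum.cong[OF refl])
    fix j
    show "(if j = i then 0 else ?F j) = (if j \<noteq> i \<and> a j = 1 then lform j * f (?b(j := 0)) else 0)"
    proof (cases "j \<noteq> i \<and> a j = 1")
      case True
      then have "?b(j := 0) \<in> std n G d" using std_remove_var[OF b, of j] by simp
      then show ?thesis using True by simp
    next
      case False
      then have "j = i \<or> a j = 0" using std_nonzero_eq_one[OF a, of j] by auto
      then show ?thesis using False by auto
    qed
  qed
  finally show ?thesis .
qed

lemma lower_at_remove_var:
  assumes a: "a \<in> std n G (Suc d)" and aj: "a j = 1"
  shows "lower (Suc d) f (a(j := 0)) = lform j * f a +
    (\<Sum>i<n. if i \<noteq> j \<and> a i = 0 \<and> (a(j := 0))(i := 1) \<in> std n G (Suc d)
       then lform i * f ((a(j := 0))(i := 1)) else 0)"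
proof -
  let ?b = "a(j := 0)"
  let ?F = "\<lambda>i. if ?b i = 0 \<and> ?b(i := 1) \<in> std n G (Suc d) then lform i * f (?b(i := 1)) else 0"
  have j: "j < n" using std_var_lt[OF a] aj by simp
  have "lower (Suc d) f ?b = (\<Sum>i<n. ?F i)"
    unfolding lower_def using std_remove_var[OF a aj] by simp
  also have "\<dots> = ?F j + (\<Sum>i<n. if i = j then 0 else ?F i)"
    by (rule sum_lessThan_pick[OF j])
  also have "?F j = lform j * f a"
    using a aj by (simp add: fun_upd_idem)
  also have "(\<Sum>i<n. if i = j then 0 else ?F i) =
      (\<Sum>i<n. if i \<noteq> j \<and> a i = 0 \<and> ?b(i := 1) \<in> std n G (Suc d) then lform i * f (?b(i := 1)) else 0)"
    by (rule sum.cong) auto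
  finally show ?thesis .
qed

lemma lower_raise_apply:
  assumes a: "a \<in> std n G d"
  shows "lower (Suc d) (raise d f) a = of_nat (card (addable a)) * f a +
    (\<Sum>i<n. \<Sum>j<n. if i \<noteq> j \<and> a i = 0 \<and> a j = 1 \<and> a(i := 1) \<in> std n G (Suc d)
       then lform i * lform j * f ((a(i := 1))(j := 0)) else 0)"
proof -
  let ?P = "\<lambda>i. a i = 0 \<and> a(i := 1) \<in> std n G (Suc d)"
  let ?T = "\<lambda>i j. if i \<noteq> j \<and> a i = 0 \<and> a j = 1 \<and> a(i := 1) \<in> std n G (Suc d)
       then lform i * lform j * f ((a(i := 1))(j := 0)) else 0"
  have "lower (Suc d) (raise d f) a = (\<Sum>i<n. if ?P i then lform i * raise d f (a(i := 1)) else 0)"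
    unfolding lower_def using a by simp
  also have "\<dots> = (\<Sum>i<n. of_bool (?P i \<and> i \<notin> Z) * f a + (\<Sum>j<n. ?T i j))"
  proof (rule sum.cong[OF refl])
    fix i assume "i \<in> {..<n}"
    then show "(if ?P i then lform i * raise d f (a(i := 1)) else 0) =
        of_bool (?P i \<and> i \<notin> Z) * f a + (\<Sum>j<n. ?T i j)"
      using raise_at_add_var[OF a, of i f]
      by (auto simp: distrib_left sum_distrib_left lform_sq mult.assoc[symmetric] intro!: sum.cong)
  qed
  also have "\<dots> = (\<Sum>i<n. of_bool (?P i \<and> i \<notin> Z) * f a) + (\<Sum>i<n. \<Sum>j<n. ?T i j)"
    by (rule sum.distrib)
  also have "(\<Sum>i<n. of_bool (?P i \<and> i \<notin> Z) * f a) = of_nat (card (addable a)) * f a"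
  proof -
    have "{..<n} \<inter> {i. ?P i \<and> i \<notin> Z} = addable a"
      using a unfolding addable_def std_def by auto
    then show ?thesis by (simp add: sum_distrib_right[symmetric])
  qed
  finally show ?thesis .
qed

lemma raise_lower_apply:
  assumes a: "a \<in> std n G (Suc d)"
  shows "raise d (lower (Suc d) f) a = of_nat (card (removable a)) * f a +
    (\<Sum>j<n. \<Sum>i<n. if i \<noteq> j \<and> a j = 1 \<and> a i = 0 \<and> (a(j := 0))(i := 1) \<in> std n G (Suc d)
       then lform j * lform i * f ((a(j := 0))(i := 1)) else 0)"
proof -
  let ?P = "\<lambda>j. 1 \<le> a j \<and> a(j := a j - 1) \<in> std n G d"
  let ?T = "\<lambda>j i. if i \<noteq> j \<and> a j = 1 \<and> a i = 0 \<and> (a(j := 0))(i := 1) \<in> std n G (Suc d)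
       then lform j * lform i * f ((a(j := 0))(i := 1)) else 0"
  have "raise d (lower (Suc d) f) a = (\<Sum>j<n. if ?P j then lform j * lower (Suc d) f (a(j := a j - 1)) else 0)"
    unfolding mult_lin_def using a by simp
  also have "\<dots> = (\<Sum>j<n. of_bool (a j = 1 \<and> j \<notin> Z) * f a + (\<Sum>i<n. ?T j i))"
  proof (rule sum.cong[OF refl])
    fix j
    show "(if ?P j then lform j * lower (Suc d) f (a(j := a j - 1)) else 0) =
        of_bool (a j = 1 \<and> j \<notin> Z) * f a + (\<Sum>i<n. ?T j i)"
    proof (cases "a j = 1")
      case True
      then show ?thesis
        using lower_at_remove_var[OF a True, of f] std_remove_var[OF a True]
        by (auto simp: distrib_left sum_distrib_left lform_sq mult.assoc[symmetric] intro!: sum.cong)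
    next
      case False
      then have "a j = 0" using std_nonzero_eq_one[OF a, of j] by auto
      then show ?thesis by simp
    qed
  qed
  also have "\<dots> = (\<Sum>j<n. of_bool (a j = 1 \<and> j \<notin> Z) * f a) + (\<Sum>j<n. \<Sum>i<n. ?T j i)"
    by (rule sum.distrib)
  also have "(\<Sum>j<n. of_bool (a j = 1 \<and> j \<notin> Z) * f a) = of_nat (card (removable a)) * f a"
  proof -
    have "{..<n} \<inter> {j. a j = 1 \<and> j \<notin> Z} = removable a"
      unfolding removable_def by auto
    then show ?thesis by (simp add: sum_distrib_right[symmetric])
  qed
  finally show ?thesis .
qed

text \<open>The cross terms of the two products cancel because of the exchange property.\<close>
lemma lower_raise_commutator:
  assumes f: "f \<in> graded_piece n G d"
  shows "lower (Suc d) (raise d f) a - raise (d - 1) (lower d f) a = of_int (weight a) * f a"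
proof (cases "a \<in> std n G d")
  case False
  have "raise (d - 1) (lower d f) a = 0"
    using False unfolding mult_lin_def lower_def by (cases d) (auto simp: sum.neutral)
  moreover have "f a = 0" using f False unfolding graded_piece_def by simp
  ultimately show ?thesis using False unfolding lower_def by simp
next
  case a: True
  let ?T = "\<lambda>i j. if i \<noteq> j \<and> a i = 0 \<and> a j = 1 \<and> a(i := 1) \<in> std n G (Suc d)
       then lform i * lform j * f ((a(i := 1))(j := 0)) else 0"
  show ?thesis
  proof (cases d)
    case 0
    then have "a j = 0" for j using std_degree_zero a by simp
    then have "?T i j = 0" "removable a = {}" for i j unfolding removable_def by auto
    moreover have "lower 0 f = (\<lambda>_. 0)" unfolding lower_def by simp
    ultimately show ?thesis
      using lower_raise_apply[OF a, of f] 0 by (simp add: mult_lin_zero weight_def algebra_simps)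
  next
    case (Suc d')
    let ?T' = "\<lambda>j i. if i \<noteq> j \<and> a j = 1 \<and> a i = 0 \<and> (a(j := 0))(i := 1) \<in> std n G d
       then lform j * lform i * f ((a(j := 0))(i := 1)) else 0"
    have cross: "?T i j = ?T' j i" for i j
    proof (cases "i \<noteq> j \<and> a i = 0 \<and> a j = 1 \<and> i \<notin> Z \<and> j \<notin> Z")
      case True
      then have swap: "(a(i := 1))(j := 0) = (a(j := 0))(i := 1)" by (simp add: fun_upd_twist)
      have "a(i := 1) \<in> std n G (Suc d) \<longleftrightarrow> (a(j := 0))(i := 1) \<in> std n G d"
      proof
        assume "a(i := 1) \<in> std n G (Suc d)"
        from std_remove_var[OF this, of j] show "(a(j := 0))(i := 1) \<in> std n G d"
          using True swap by simp
      next
        assume swapped: "(a(j := 0))(i := 1) \<in> std n G d"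
        moreover have "i < n" using std_var_lt[OF swapped, of i] by simp
        ultimately show "a(i := 1) \<in> std n G (Suc d)" using std_exchange[OF a, of i j] True by simp
      qed
      then show ?thesis using swap by (simp add: mult.commute)
    next
      case False
      then show ?thesis unfolding lform_def by auto
    qed
    have "(\<Sum>i<n. \<Sum>j<n. ?T i j) = (\<Sum>j<n. \<Sum>i<n. ?T' j i)"
      unfolding cross by (rule sum.swap)
    then show ?thesis
      using lower_raise_apply[OF a, of f] raise_lower_apply[of a d' f] a Suc
      by (simp add: weight_def algebra_simps)
  qed
qed

lemma lower_zero: "lower e (\<lambda>_. 0) = (\<lambda>_. 0)"
  unfolding lower_def by (rule ext) (simp add: sum.neutral)

lemma lower_scale: "lower e (\<lambda>x. r * g x) = (\<lambda>x. r * lower e g x)"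
  unfolding lower_def by (rule ext) (auto simp: sum_distrib_left algebra_simps intro!: sum.cong)

lemma lower_in_graded_piece: "lower (Suc d) g \<in> graded_piece n G d"
  unfolding lower_def graded_piece_def by auto

definition supported_on :: "('a \<Rightarrow> 'b::zero) \<Rightarrow> 'a set \<Rightarrow> bool" where
  "supported_on f X \<longleftrightarrow> (\<forall>x. x \<notin> X \<longrightarrow> f x = 0)"

definition weight_space :: "nat \<Rightarrow> int \<Rightarrow> monomial set" where
  "weight_space d v = {a \<in> std n G d. weight a = v}"

lemma supported_weight_space_graded_piece:
  "supported_on f (weight_space d v) \<Longrightarrow> f \<in> graded_piece n G d"
  unfolding supported_on_def weight_space_def graded_piece_def by auto

lemma weight_mult_supported:
  "supported_on f (weight_space d v) \<Longrightarrow> of_int (weight x) * f x = of_int v * f x"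
  unfolding supported_on_def weight_space_def by (cases "x \<in> std n G d \<and> weight x = v") auto

lemma lower_raise_commutator_weight_space:
  assumes "supported_on f (weight_space d v)"
  shows "lower (Suc d) (raise d f) x - raise (d - 1) (lower d f) x = of_int v * f x"
  using lower_raise_commutator[OF supported_weight_space_graded_piece[OF assms]]
    weight_mult_supported[OF assms] by simp

lemma raise_weight_space:
  assumes f: "supported_on f (weight_space d v)"
  shows "supported_on (raise d f) (weight_space (Suc d) (v - 2))"
  unfolding supported_on_def
proof (intro allI impI)
  fix b assume b: "b \<notin> weight_space (Suc d) (v - 2)"
  show "raise d f b = 0"
  proof (cases "b \<in> std n G (Suc d)")
    case True
    have "f (b(i := b i - 1)) = 0" if "1 \<le> b i" "i \<notin> Z" for i
    proof -
      have "b i = 1" using std_nonzero_eq_one[OF True, of i] that by simp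
      then have "weight (b(i := 0)) = weight b + 2" using weight_remove_var[OF True] that by simp
      then have "b(i := 0) \<notin> weight_space d v" using b True unfolding weight_space_def by auto
      then show ?thesis using f \<open>b i = 1\<close> unfolding supported_on_def by simp
    qed
    then show ?thesis unfolding mult_lin_def lform_def by (auto intro: sum.neutral)
  qed (simp add: mult_lin_def)
qed

lemma lower_weight_space:
  assumes g: "supported_on g (weight_space e v)"
  shows "supported_on (lower e g) (weight_space (e - 1) (v + 2))"
  unfolding supported_on_def
proof (intro allI impI)
  fix a assume a: "a \<notin> weight_space (e - 1) (v + 2)"
  show "lower e g a = 0"
  proof (cases "0 < e \<and> a \<in> std n G (e - 1)")
    case True
    have "g (a(i := 1)) = 0" if "a i = 0" "a(i := 1) \<in> std n G e" "i \<notin> Z" for i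
    proof -
      have "a(i := 1) \<in> std n G (Suc (e - 1))" using that True by simp
      from weight_remove_var[OF this, of i] that
      have "weight ((a(i := 1))(i := 0)) = weight (a(i := 1)) + 2" by simp
      moreover have "(a(i := 1))(i := 0) = a" using that by (simp add: fun_upd_idem)
      ultimately have "weight a = weight (a(i := 1)) + 2" by simp
      then have "a(i := 1) \<notin> weight_space e v" using a True unfolding weight_space_def by auto
      then show ?thesis using g unfolding supported_on_def by simp
    qed
    then show ?thesis unfolding lower_def lform_def by (auto intro: sum.neutral)
  qed (auto simp: lower_def)
qed

primrec lower_pow :: "nat \<Rightarrow> nat \<Rightarrow> (monomial \<Rightarrow> 'k::field) \<Rightarrow> monomial \<Rightarrow> 'k" where
  "lower_pow 0 d f = f"
| "lower_pow (Suc k) d f = lower (d - k) (lower_pow k d f)"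

lemma lower_pow_weight_space:
  "supported_on f (weight_space d v) \<Longrightarrow>
    supported_on (lower_pow k d f) (weight_space (d - k) (v + 2 * int k))"
proof (induction k)
  case (Suc k)
  from lower_weight_space[OF Suc.IH[OF Suc.prems]] show ?case
    by (simp add: algebra_simps)
qed simp

lemma raise_lower_pow:
  assumes f: "supported_on f (weight_space d v)" and Ef: "raise d f = (\<lambda>_. 0)" and "k \<le> d"
  shows "raise (d - Suc k) (lower_pow (Suc k) d f) =
    (\<lambda>x. - of_int (int (Suc k) * (v + int k)) * lower_pow k d f x)"
  using \<open>k \<le> d\<close>
proof (induction k)
  case 0
  have "- raise (d - 1) (lower d f) x = of_int v * f x" for x
    using lower_raise_commutator_weight_space[OF f, of x] by (simp add: Ef lower_zero)
  then have "raise (d - 1) (lower d f) x = - of_int v * f x" for x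
    by (metis minus_minus mult_minus_left)
  then show ?case by (simp add: fun_eq_iff)
next
  case (Suc k)
  define h where "h = lower_pow (Suc k) d f"
  define e where "e = d - Suc k"
  have h: "supported_on h (weight_space e (v + 2 * int (Suc k)))"
    unfolding h_def e_def by (rule lower_pow_weight_space[OF f])
  have IH: "raise e h = (\<lambda>x. - of_int (int (Suc k) * (v + int k)) * lower_pow k d f x)"
    unfolding e_def h_def using Suc by simp
  have "lower (Suc e) (lower_pow k d f) = h"
    unfolding h_def e_def using Suc.prems by (simp add: Suc_diff_Suc)
  then have lower_IH: "lower (Suc e) (raise e h) = (\<lambda>x. - of_int (int (Suc k) * (v + int k)) * h x)"
    by (simp only: IH lower_scale)
  have "raise (e - 1) (lower e h) x = - of_int (int (Suc (Suc k)) * (v + int (Suc k))) * h x" for x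
  proof -
    have "raise (e - 1) (lower e h) x = lower (Suc e) (raise e h) x - of_int (v + 2 * int (Suc k)) * h x"
      using lower_raise_commutator_weight_space[OF h, of x] by (simp add: algebra_simps)
    also have "\<dots> = of_int (- (int (Suc k) * (v + int k)) - (v + 2 * int (Suc k))) * h x"
      using fun_cong[OF lower_IH, of x] by (simp add: left_diff_distrib)
    also have "- (int (Suc k) * (v + int k)) - (v + 2 * int (Suc k)) = - (int (Suc (Suc k)) * (v + int (Suc k)))"
      by (simp add: algebra_simps)
    finally show ?thesis by simp
  qed
  moreover have "raise (d - Suc (Suc k)) (lower_pow (Suc (Suc k)) d f) = raise (e - 1) (lower e h)"
    unfolding e_def h_def by simp
  ultimately show ?case unfolding h_def by simp
qed

lemma raise_eq_zero_pos_weight: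
  fixes f :: "monomial \<Rightarrow> 'k::field_char_0"
  assumes f: "supported_on f (weight_space d v)" and Ef: "raise d f = (\<lambda>_. 0)" and v: "1 \<le> v"
  shows "f = (\<lambda>_. 0)"
proof -
  \<comment> \<open>Descending induction, starting below degree 0 where \<^const>\<open>lower\<close> gives 0;
    the coefficient \<open>(k + 1)(v + k)\<close> in \<open>raise_lower_pow\<close> is nonzero in characteristic 0.\<close>
  have "lower_pow k d f = (\<lambda>_. 0)" if "k \<le> Suc d" for k
    using that
  proof (induction k rule: inc_induct)
    case base
    show ?case by (simp add: lower_def)
  next
    case (step k)
    then have "k \<le> d" by simp
    have "of_int (int (Suc k) * (v + int k)) \<noteq> (0::'k)"
      using v by (simp only: of_int_eq_0_iff) simp
    moreover have "(\<lambda>x. - of_int (int (Suc k) * (v + int k)) * lower_pow k d f x) = (\<lambda>_. 0)"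
      using raise_lower_pow[OF f Ef \<open>k \<le> d\<close>] step.IH by (simp only: mult_lin_zero)
    ultimately show ?case by (simp add: fun_eq_iff)
  qed
  from this[of 0] show ?thesis by simp
qed

primrec raise_pow :: "nat \<Rightarrow> nat \<Rightarrow> (monomial \<Rightarrow> 'k::field) \<Rightarrow> monomial \<Rightarrow> 'k" where
  "raise_pow 0 d g = g"
| "raise_pow (Suc k) d g = raise (d + k) (raise_pow k d g)"

lemma raise_pow_weight_space:
  "supported_on g (weight_space d v) \<Longrightarrow>
    supported_on (raise_pow k d g) (weight_space (d + k) (v - 2 * int k))"
proof (induction k)
  case (Suc k)
  from raise_weight_space[OF Suc.IH[OF Suc.prems]] show ?case
    by (simp add: algebra_simps)
qed simp

lemma raise_pow_Suc': "raise_pow (Suc k) d g = raise_pow k (Suc d) (raise d g)"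
  by (induction k) simp_all

lemma raise_pow_add_scale:
  "raise_pow k d (\<lambda>x. g x + r * h x) = (\<lambda>x. raise_pow k d g x + r * raise_pow k d h x)"
  by (induction k) (simp_all add: mult_lin_add mult_lin_scale)

lemma lower_raise_pow:
  assumes g: "supported_on g (weight_space (Suc d) v)"
  shows "lower (Suc d + k) (raise_pow k (Suc d) g) = (\<lambda>x. raise_pow k d (lower (Suc d) g) x +
    of_int (int k * (v - int k + 1)) * raise_pow (k - 1) (Suc d) g x)"
proof (induction k)
  case (Suc k)
  define X where "X = raise_pow k (Suc d) g"
  define c where "c = int k * (v - int k + 1)"
  have X: "supported_on X (weight_space (Suc d + k) (v - 2 * int k))"
    unfolding X_def by (rule raise_pow_weight_space[OF g])
  have prev: "of_int c * raise (d + k) (raise_pow (k - 1) (Suc d) g) x = of_int c * X x" for x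
    unfolding X_def c_def by (cases k) simp_all
  show ?case
  proof (rule ext)
    fix x
    have "lower (Suc d + Suc k) (raise_pow (Suc k) (Suc d) g) x
        = raise (d + k) (lower (Suc d + k) X) x + of_int (v - 2 * int k) * X x"
      using lower_raise_commutator_weight_space[OF X, of x] unfolding X_def
      by (simp add: algebra_simps)
    also have "raise (d + k) (lower (Suc d + k) X) x
        = raise_pow (Suc k) d (lower (Suc d) g) x + of_int c * X x"
      using Suc.IH prev unfolding X_def c_def by (simp add: mult_lin_add mult_lin_scale)
    also have "raise_pow (Suc k) d (lower (Suc d) g) x + of_int c * X x + of_int (v - 2 * int k) * X x
        = raise_pow (Suc k) d (lower (Suc d) g) x + of_int (c + (v - 2 * int k)) * X x"
      by (simp add: distrib_right)
    also have "c + (v - 2 * int k) = int (Suc k) * (v - int (Suc k) + 1)"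
      unfolding c_def by (simp add: algebra_simps)
    finally show "lower (Suc d + Suc k) (raise_pow (Suc k) (Suc d) g) x
        = raise_pow (Suc k) d (lower (Suc d) g) x
          + of_int (int (Suc k) * (v - int (Suc k) + 1)) * raise_pow (Suc k - 1) (Suc d) g x"
      unfolding X_def by simp
  qed
qed simp

lemma raise_image_neg_weight:
  fixes g :: "monomial \<Rightarrow> 'k::field_char_0"
  assumes v: "v \<le> -1"
    and g: "supported_on g (weight_space (Suc d) v)" and Eg: "raise_pow k (Suc d) g = (\<lambda>_. 0)"
  shows "g \<in> raise d ` graded_piece n G d"
  using g Eg
proof (induction k arbitrary: g)
  case 0
  have "g = raise d (\<lambda>_. 0)" using 0 by (simp add: mult_lin_zero)
  moreover have "(\<lambda>_. 0) \<in> graded_piece n G d" unfolding graded_piece_def by simp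
  ultimately show ?case by (rule image_eqI)
next
  case (Suc k)
  \<comment> \<open>Adding a multiple of \<open>raise d (lower (Suc d) g)\<close> to \<open>g\<close> yields a vector killed by
    one raising less.\<close>
  define c where "c = (of_int (int (Suc k) * (v - int (Suc k) + 1)) :: 'k)"
  have "c \<noteq> 0"
    unfolding c_def using v by (simp only: of_int_eq_0_iff) simp
  define w where "w = raise d (lower (Suc d) g)"
  have w: "supported_on w (weight_space (Suc d) v)"
    unfolding w_def using raise_weight_space[OF lower_weight_space[OF Suc.prems(1)]] by simp
  have "(\<lambda>x. raise_pow (Suc k) d (lower (Suc d) g) x + c * raise_pow k (Suc d) g x) = (\<lambda>_. 0)"
    using lower_raise_pow[OF Suc.prems(1), of "Suc k"] Suc.prems(2) by (simp add: lower_zero c_def)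
  then have "raise_pow k (Suc d) w x = - (c * raise_pow k (Suc d) g x)" for x
    unfolding w_def raise_pow_Suc' by (simp add: fun_eq_iff eq_neg_iff_add_eq_0)
  then have "raise_pow k (Suc d) (\<lambda>x. g x + inverse c * w x) = (\<lambda>_. 0)"
    unfolding raise_pow_add_scale using \<open>c \<noteq> 0\<close> by (simp add: mult.assoc[symmetric])
  moreover have "supported_on (\<lambda>x. g x + inverse c * w x) (weight_space (Suc d) v)"
    using Suc.prems(1) w unfolding supported_on_def by simp
  ultimately have "(\<lambda>x. g x + inverse c * w x) \<in> raise d ` graded_piece n G d"
    by (rule Suc.IH[rotated])
  then obtain h where h: "h \<in> graded_piece n G d" "(\<lambda>x. g x + inverse c * w x) = raise d h"
    by blast
  have "raise d (\<lambda>x. h x - inverse c * lower (Suc d) g x) = (\<lambda>x. raise d h x - inverse c * w x)"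
    unfolding mult_lin_diff mult_lin_scale w_def ..
  also have "\<dots> = g"
    unfolding h(2)[symmetric] by simp
  finally have "g = raise d (\<lambda>x. h x - inverse c * lower (Suc d) g x)" ..
  moreover have "(\<lambda>x. h x - inverse c * lower (Suc d) g x) \<in> graded_piece n G d"
    using h(1) lower_in_graded_piece[of d g] unfolding graded_piece_def by simp
  ultimately show ?case by (rule image_eqI)
qed

lemma raise_restrict_weight:
  "raise d (\<lambda>x. if weight x = v then f x else 0) b = (if weight b = v - 2 then raise d f b else 0)"
proof (cases "b \<in> std n G (Suc d)")
  case True
  have "lform i * (if weight (b(i := b i - 1)) = v then f (b(i := b i - 1)) else 0)
      = (if weight b = v - 2 then lform i * f (b(i := b i - 1)) else 0)" if "1 \<le> b i" for i
  proof (cases "i \<in> Z")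
    case False
    have "b i = 1" using std_nonzero_eq_one[OF True, of i] that by simp
    then show ?thesis using weight_remove_var[OF True _ False] by auto
  qed (simp add: lform_def)
  then show ?thesis unfolding mult_lin_def using True by (auto intro!: sum.cong sum.neutral)
qed (simp add: mult_lin_def)

lemma inj_on_raise_if_pos_weight:
  assumes pos: "\<forall>a\<in>std n G d. 1 \<le> weight a"
  shows "inj_on (raise d :: (monomial \<Rightarrow> 'k::field_char_0) \<Rightarrow> _) (graded_piece n G d)"
proof (rule inj_onI)
  fix f1 f2 :: "monomial \<Rightarrow> 'k"
  assume f1: "f1 \<in> graded_piece n G d" and f2: "f2 \<in> graded_piece n G d" and eq: "raise d f1 = raise d f2"
  define f where "f = (\<lambda>x. f1 x - f2 x)"
  have f: "f \<in> graded_piece n G d" using f1 f2 unfolding f_def graded_piece_def by simp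
  have Ef: "raise d f = (\<lambda>_. 0)" unfolding f_def mult_lin_diff eq by simp
  have "f a = 0" for a
  proof (cases "a \<in> std n G d")
    case True
    define fa where "fa = (\<lambda>x. if weight x = weight a then f x else 0)"
    have "supported_on fa (weight_space d (weight a))"
      using f unfolding fa_def supported_on_def weight_space_def graded_piece_def by auto
    moreover have "raise d fa = (\<lambda>_. 0)"
      unfolding fa_def by (rule ext) (simp add: raise_restrict_weight Ef)
    ultimately have "fa = (\<lambda>_. 0)"
      by (rule raise_eq_zero_pos_weight) (use pos True in auto)
    from fun_cong[OF this, of a] show ?thesis unfolding fa_def by simp
  qed (use f in \<open>simp add: graded_piece_def\<close>)
  then show "f1 = f2" unfolding f_def by (simp add: fun_eq_iff)
qed

lemma raise_onto_if_neg_weight: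
  assumes neg: "\<forall>b\<in>std n G (Suc d). weight b \<le> -1"
  shows "(raise d :: (monomial \<Rightarrow> 'k::field_char_0) \<Rightarrow> _) ` graded_piece n G d = graded_piece n G (Suc d)"
proof
  show "raise d ` graded_piece n G d \<subseteq> graded_piece n G (Suc d)"
    using mult_lin_in_graded_piece by blast
next
  show "graded_piece n G (Suc d) \<subseteq> (raise d :: (monomial \<Rightarrow> 'k) \<Rightarrow> _) ` graded_piece n G d"
  proof
    fix g :: "monomial \<Rightarrow> 'k" assume g: "g \<in> graded_piece n G (Suc d)"
    define V where "V = weight ` std n G (Suc d)"
    define gv where "gv v = (\<lambda>x. if weight x = v then g x else 0)" for v
    have "gv v \<in> raise d ` graded_piece n G d" if "v \<in> V" for v
    proof (rule raise_image_neg_weight)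
      show "v \<le> -1" using that neg unfolding V_def by auto
      show gv: "supported_on (gv v) (weight_space (Suc d) v)"
        using g unfolding gv_def supported_on_def weight_space_def graded_piece_def by auto
      have "weight_space (Suc d + Suc n) (v - 2 * int (Suc n)) = {}"
        unfolding weight_space_def using std_empty_above[of "Suc d + Suc n"] by simp
      then show "raise_pow (Suc n) (Suc d) (gv v) = (\<lambda>_. 0)"
        using raise_pow_weight_space[OF gv, of "Suc n"] unfolding supported_on_def by auto
    qed
    then have "\<forall>v\<in>V. \<exists>hv. hv \<in> graded_piece n G d \<and> gv v = raise d hv"
      by blast
    then obtain h where h: "\<forall>v\<in>V. h v \<in> graded_piece n G d \<and> gv v = raise d (h v)"
      by (rule bchoice[THEN exE])
    have "finite V" unfolding V_def using finite_std by simp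
    have "g x = (\<Sum>v\<in>V. gv v x)" for x
      using g \<open>finite V\<close> unfolding gv_def V_def graded_piece_def by (cases "x \<in> std n G (Suc d)") auto
    also have "(\<Sum>v\<in>V. gv v x) = raise d (\<lambda>x. \<Sum>v\<in>V. h v x) x" for x
      using h by (simp add: mult_lin_sum[OF \<open>finite V\<close>])
    finally have "g = raise d (\<lambda>x. \<Sum>v\<in>V. h v x)" ..
    moreover have "(\<lambda>x. \<Sum>v\<in>V. h v x) \<in> graded_piece n G d"
      using h unfolding graded_piece_def by simp
    ultimately show "g \<in> raise d ` graded_piece n G d" by (rule image_eqI)
  qed
qed

lemma has_WLP_if_weight_bounds:
  assumes bounds: "\<And>a s. a \<in> std n G s \<Longrightarrow> int n - 2 - 2 * int s \<le> weight a \<and> weight a \<le> int n - 2 * int s"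
    and "odd n"
  shows "has_WLP TYPE('k::field_char_0) n G"
  unfolding has_WLP_def
proof (intro exI allI)
  fix d
  show "max_rank_at n G (lform :: nat \<Rightarrow> 'k) d"
  proof (cases "2 * d + 3 \<le> n")
    case True
    then have "\<forall>a\<in>std n G d. 1 \<le> weight a" using bounds by fastforce
    then show ?thesis unfolding max_rank_at_def using inj_on_raise_if_pos_weight by blast
  next
    case False
    with \<open>odd n\<close> have "n \<le> 2 * d + 1" by presburger
    then have "\<forall>b\<in>std n G (Suc d). weight b \<le> -1" using bounds by fastforce
    then show ?thesis unfolding max_rank_at_def using raise_onto_if_neg_weight by blast
  qed
qed

lemma weight_eq:
  assumes Z: "Z \<subseteq> {..<n}" and a: "a \<in> std n G s"
  shows "weight a = int n - int (card Z) - 2 * int s + 2 * int (card {i\<in>Z. a i = 1})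
    - int (card {i. i < n \<and> i \<notin> Z \<and> a i = 0 \<and> a(i := 1) \<notin> std n G (Suc s)})"
proof -
  define zeros where "zeros = {i. i < n \<and> i \<notin> Z \<and> a i = 0}"
  define blocked where "blocked = {i. i < n \<and> i \<notin> Z \<and> a i = 0 \<and> a(i := 1) \<notin> std n G (Suc s)}"
  have deg: "mon_deg n a = s" using a unfolding std_def by simp
  have "addable a = zeros - blocked" "blocked \<subseteq> zeros" "finite zeros"
    unfolding addable_def zeros_def blocked_def deg by auto
  then have addable: "card (addable a) + card blocked = card zeros"
    by (simp add: card_Diff_subset card_mono finite_subset)
  have "{..<n} - Z = zeros \<union> removable a" "zeros \<inter> removable a = {}"
    unfolding zeros_def removable_def using std_nonzero_eq_one[OF a] by auto
  moreover have "card (zeros \<union> removable a) = card zeros + card (removable a)"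
    by (rule card_Un_disjoint) (auto simp: zeros_def removable_def)
  moreover have "card ({..<n} - Z) = n - card Z"
    using Z by (simp add: card_Diff_subset finite_subset)
  ultimately have "card zeros + card (removable a) = n - card Z" by simp
  moreover have "card Z \<le> n" using card_mono[OF finite_lessThan Z] by simp
  moreover have "s = card (removable a) + card {i\<in>Z. a i = 1}"
  proof -
    have "s = (\<Sum>i<n. a i)" using deg unfolding mon_deg_def by simp
    also have "\<dots> = (\<Sum>i<n. of_bool (a i = 1))"
      by (rule sum.cong) (use std_nonzero_eq_one[OF a] in \<open>auto simp: of_bool_def\<close>)
    also have "\<dots> = card ({..<n} \<inter> {i. a i = 1})" by simp
    also have "{..<n} \<inter> {i. a i = 1} = removable a \<union> {i\<in>Z. a i = 1}"
      unfolding removable_def using Z by auto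
    also have "card \<dots> = card (removable a) + card {i\<in>Z. a i = 1}"
      using finite_subset[OF Z] by (intro card_Un_disjoint) (auto simp: removable_def)
    finally show ?thesis .
  qed
  ultimately show ?thesis
    unfolding weight_def blocked_def[symmetric] using addable by simp
qed

end

section \<open>Squares and two edges\<close>

definition square_mon :: "nat \<Rightarrow> monomial" where
  "square_mon j = (\<lambda>_. 0)(j := 2)"

definition prod_mon :: "nat \<Rightarrow> nat \<Rightarrow> monomial" where
  "prod_mon p q = (\<lambda>i. if i = p \<or> i = q then 1 else 0)"

definition squares_two_edges :: "nat \<Rightarrow> nat \<Rightarrow> nat \<Rightarrow> nat \<Rightarrow> nat \<Rightarrow> monomial set" where
  "squares_two_edges n p q p' q' = insert (prod_mon p q) (insert (prod_mon p' q') (square_mon ` {..<n}))"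

lemma prod_mon_commute: "prod_mon p q = prod_mon q p"
  unfolding prod_mon_def by meson

lemma mon_dvd_square_mon: "mon_dvd (square_mon j) a \<longleftrightarrow> 2 \<le> a j"
  unfolding mon_dvd_def square_mon_def by auto

lemma mon_dvd_prod_mon: "mon_dvd (prod_mon p q) a \<longleftrightarrow> 1 \<le> a p \<and> 1 \<le> a q"
  unfolding mon_dvd_def prod_mon_def by auto

lemma std_squares_two_edges:
  "a \<in> std n (squares_two_edges n p q p' q') d \<longleftrightarrow>
    is_mon n a \<and> mon_deg n a = d \<and> (\<forall>j. a j \<le> 1) \<and> (a p = 0 \<or> a q = 0) \<and> (a p' = 0 \<or> a q' = 0)"
proof -
  have "is_mon n a \<Longrightarrow> (\<forall>j<n. a j < 2) \<longleftrightarrow> (\<forall>j. a j \<le> 1)"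
    unfolding is_mon_def by (metis less_2_cases_iff not_le le_zero_eq zero_le_one le_Suc_eq One_nat_def)
  then show ?thesis
    unfolding std_def in_mon_ideal_def squares_two_edges_def
    by (auto simp: mon_dvd_square_mon mon_dvd_prod_mon not_le)
qed

lemma std_squares_two_edges_add_var:
  assumes "a \<in> std n (squares_two_edges n p q p' q') s" and "i < n" and "a i = 0"
    and "p \<noteq> q" and "p' \<noteq> q'"
  shows "a(i := 1) \<in> std n (squares_two_edges n p q p' q') (Suc s) \<longleftrightarrow>
    (i = p \<longrightarrow> a q = 0) \<and> (i = q \<longrightarrow> a p = 0) \<and> (i = p' \<longrightarrow> a q' = 0) \<and> (i = q' \<longrightarrow> a p' = 0)"
  using assms mon_deg_fun_upd[of i n a 1] unfolding std_squares_two_edges is_mon_def by auto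

text \<open>Every edge meets \<open>Z\<close>, so a variable outside \<open>Z\<close> can only be blocked by a neighbour in \<open>Z\<close>,
  which an exchange of two variables outside \<open>Z\<close> does not affect.\<close>
lemma squarefree_exchange_squares_two_edges:
  assumes "p \<noteq> q" and "p' \<noteq> q'" and "p \<in> Z \<or> q \<in> Z" and "p' \<in> Z \<or> q' \<in> Z"
  shows "squarefree_exchange n (squares_two_edges n p q p' q') Z"
proof
  fix a d i
  show "a \<in> std n (squares_two_edges n p q p' q') d \<Longrightarrow> a i \<le> 1"
    unfolding std_squares_two_edges by simp
next
  fix a d i j
  assume a: "a \<in> std n (squares_two_edges n p q p' q') d" and "a i = 0" "a j = 1" "i \<noteq> j"
    "i \<notin> Z" "j \<notin> Z" "i < n" "(a(j := 0))(i := 1) \<in> std n (squares_two_edges n p q p' q') d"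
  then show "a(i := 1) \<in> std n (squares_two_edges n p q p' q') (Suc d)"
    using assms unfolding std_squares_two_edges_add_var[OF a \<open>i < n\<close> \<open>a i = 0\<close> assms(1,2)]
    unfolding std_squares_two_edges by (auto split: if_splits)
qed

lemma has_WLP_squares_disjoint_edges:
  assumes "distinct [p, q, p', q']" and "p < n" "q < n" "p' < n" "q' < n" and "odd n"
  shows "has_WLP TYPE('k::field_char_0) n (squares_two_edges n p q p' q')"
proof -
  let ?G = "squares_two_edges n p q p' q'"
  interpret squarefree_exchange n ?G "{q, q'}"
    by (rule squarefree_exchange_squares_two_edges) (use assms in auto)
  have bounds: "int n - 2 - 2 * int s \<le> weight a \<and> weight a \<le> int n - 2 * int s"
    if a: "a \<in> std n ?G s" for a s
  proof -
    let ?ones = "{i\<in>{q, q'}. a i = 1}"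
    let ?blocked = "{i. i < n \<and> i \<notin> {q, q'} \<and> a i = 0 \<and> a(i := 1) \<notin> std n ?G (Suc s)}"
    have "a q = 0 \<or> a q = 1" "a q' = 0 \<or> a q' = 1" "a p = 0 \<or> a q = 0" "a p' = 0 \<or> a q' = 0"
      using a unfolding std_squares_two_edges by (auto simp: le_Suc_eq)
    have "?blocked = {i. (i = p \<and> a q = 1) \<or> (i = p' \<and> a q' = 1)}"
    proof (intro set_eqI)
      fix i
      show "i \<in> ?blocked \<longleftrightarrow> i \<in> {i. (i = p \<and> a q = 1) \<or> (i = p' \<and> a q' = 1)}"
      proof (cases "i < n \<and> a i = 0")
        case True
        have "a(i := 1) \<notin> std n ?G (Suc s) \<longleftrightarrow>
            \<not> ((i = p \<longrightarrow> a q = 0) \<and> (i = q \<longrightarrow> a p = 0) \<and> (i = p' \<longrightarrow> a q' = 0) \<and> (i = q' \<longrightarrow> a p' = 0))"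
          using std_squares_two_edges_add_var[of a n p q p' q' s i] a True assms(1) by simp
        then show ?thesis
          using True \<open>distinct [p, q, p', q']\<close> \<open>a q = 0 \<or> a q = 1\<close> \<open>a q' = 0 \<or> a q' = 1\<close>
          by (cases "i = p"; cases "i = p'") auto
      next
        case False
        then show ?thesis
          using \<open>p < n\<close> \<open>p' < n\<close> \<open>a p = 0 \<or> a q = 0\<close> \<open>a p' = 0 \<or> a q' = 0\<close> by auto
      qed
    qed
    also have "\<dots> = (\<lambda>i. if i = q then p else p') ` ?ones"
      using assms by auto
    also have "card \<dots> = card ?ones"
      using assms by (intro card_image inj_onI) auto
    finally have "card ?blocked = card ?ones" .
    moreover have "weight a = int n - int (card {q, q'}) - 2 * int s + 2 * int (card ?ones) - int (card ?blocked)"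
      by (rule weight_eq[OF _ a]) (use assms in auto)
    moreover have "card ?ones \<le> card {q, q'}" by (intro card_mono) auto
    moreover have "card {q, q'} = 2" using assms by simp
    ultimately show ?thesis by linarith
  qed
  show ?thesis by (rule has_WLP_if_weight_bounds[OF bounds \<open>odd n\<close>])
qed

lemma has_WLP_squares_path:
  assumes "distinct [x, y, z]" and "x < n" "y < n" "z < n" and "odd n"
  shows "has_WLP TYPE('k::field_char_0) n (squares_two_edges n x y y z)"
proof -
  let ?G = "squares_two_edges n x y y z"
  interpret squarefree_exchange n ?G "{y}"
    by (rule squarefree_exchange_squares_two_edges) (use assms in auto)
  have bounds: "int n - 2 - 2 * int s \<le> weight a \<and> weight a \<le> int n - 2 * int s"
    if a: "a \<in> std n ?G s" for a s
  proof -
    let ?ones = "{i\<in>{y}. a i = 1}"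
    let ?blocked = "{i. i < n \<and> i \<notin> {y} \<and> a i = 0 \<and> a(i := 1) \<notin> std n ?G (Suc s)}"
    have "a y = 0 \<or> a y = 1" "a x = 0 \<or> a y = 0" "a y = 0 \<or> a z = 0"
      using a unfolding std_squares_two_edges by (auto simp: le_Suc_eq)
    have "?blocked = (if a y = 1 then {x, z} else {})"
    proof (intro set_eqI)
      fix i
      show "i \<in> ?blocked \<longleftrightarrow> i \<in> (if a y = 1 then {x, z} else {})"
      proof (cases "i < n \<and> a i = 0")
        case True
        have "a(i := 1) \<notin> std n ?G (Suc s) \<longleftrightarrow>
            \<not> ((i = x \<longrightarrow> a y = 0) \<and> (i = y \<longrightarrow> a x = 0) \<and> (i = y \<longrightarrow> a z = 0) \<and> (i = z \<longrightarrow> a y = 0))"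
          using std_squares_two_edges_add_var[of a n x y y z s i] a True assms(1) by simp
        then show ?thesis
          using True \<open>distinct [x, y, z]\<close> \<open>a y = 0 \<or> a y = 1\<close>
          by (cases "a y = 1"; cases "i = x"; cases "i = z"; cases "i = y") simp_all
      next
        case False
        then show ?thesis
          using \<open>x < n\<close> \<open>z < n\<close> \<open>a x = 0 \<or> a y = 0\<close> \<open>a y = 0 \<or> a z = 0\<close> by auto
      qed
    qed
    moreover have "?ones = (if a y = 1 then {y} else {})" by auto
    ultimately have "card ?blocked = 2 * card ?ones"
      using \<open>distinct [x, y, z]\<close> by simp
    moreover have "weight a = int n - int (card {y}) - 2 * int s + 2 * int (card ?ones) - int (card ?blocked)"
      by (rule weight_eq[OF _ a]) (use assms in auto)
    ultimately show ?thesis by simp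
  qed
  show ?thesis by (rule has_WLP_if_weight_bounds[OF bounds \<open>odd n\<close>])
qed

lemma square_mon_mem_if_artinian:
  assumes quad: "\<forall>g\<in>G. is_mon n g \<and> mon_deg n g = 2" and "artinian_mon n G" and "j < n"
  shows "square_mon j \<in> G"
proof -
  obtain k g where g: "g \<in> G" "mon_dvd g ((\<lambda>_. 0)(j := k))"
    using assms unfolding artinian_mon_def in_mon_ideal_def by blast
  then have zero: "g i = 0" if "i \<noteq> j" for i
    using that unfolding mon_dvd_def by (metis fun_upd_other le_zero_eq)
  have "(\<Sum>i<n. g i) = (\<Sum>i<n. if i = j then g j else 0)"
    by (rule sum.cong) (auto simp: zero)
  then have "g j = 2" using quad g(1) \<open>j < n\<close> unfolding mon_deg_def by simp
  then have "g = square_mon j" unfolding square_mon_def using zero by (auto simp: fun_eq_iff)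
  then show ?thesis using g(1) by simp
qed

lemma quadratic_mon_cases:
  assumes g: "is_mon n g" "mon_deg n g = 2"
  obtains (square) j where "j < n" "g = square_mon j"
    | (product) p q where "p \<noteq> q" "p < n" "q < n" "g = prod_mon p q"
proof (cases "\<exists>j. 2 \<le> g j")
  case True
  then obtain j where j: "2 \<le> g j" by blast
  then have "j < n" using g(1) unfolding is_mon_def by (metis not_le not_numeral_le_zero)
  have "g j + (\<Sum>i\<in>{..<n} - {j}. g i) = 2"
    using g(2) \<open>j < n\<close> unfolding mon_deg_def by (simp add: sum.remove)
  then have "g j = 2" "(\<Sum>i\<in>{..<n} - {j}. g i) = 0" using j by linarith+
  then have "g j = 2" "\<forall>i\<in>{..<n} - {j}. g i = 0" by simp_all
  then have "g = square_mon j"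
    using g(1) unfolding square_mon_def is_mon_def by (auto simp: fun_eq_iff) (meson Diff_iff lessThan_iff not_le singletonD)
  then show ?thesis using square \<open>j < n\<close> by blast
next
  case False
  then have le1: "g i \<le> 1" for i by (metis not_le Suc_1 Suc_leI)
  have "(\<Sum>i<n. g i) = (\<Sum>i<n. of_bool (g i = 1))"
    by (rule sum.cong) (use le1 in \<open>auto simp: le_Suc_eq\<close>)
  then have "card ({..<n} \<inter> {i. g i = 1}) = 2" using g(2) unfolding mon_deg_def by simp
  then obtain p q where pq: "{..<n} \<inter> {i. g i = 1} = {p, q}" "p \<noteq> q" by (meson card_2_iff)
  have "g = prod_mon p q"
  proof (rule ext)
    fix i
    show "g i = prod_mon p q i"
    proof (cases "i < n")
      case True
      then have "g i = 1 \<longleftrightarrow> i = p \<or> i = q" using pq(1) by blast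
      then show ?thesis unfolding prod_mon_def using le1[of i] by (auto simp: le_Suc_eq)
    next
      case False
      then show ?thesis using g(1) pq(1) unfolding is_mon_def prod_mon_def by auto
    qed
  qed
  moreover have "p < n" "q < n" using pq(1) by auto
  ultimately show ?thesis using product pq(2) by blast
qed

lemma artinian_quadratic_generators:
  assumes "finite G" and "card G = n + 2"
    and quad: "\<forall>g\<in>G. is_mon n g \<and> mon_deg n g = 2" and "artinian_mon n G"
  obtains p q p' q' where "p \<noteq> q" "p' \<noteq> q'" "p < n" "q < n" "p' < n" "q' < n"
    "{p, q} \<noteq> {p', q'}" "G = squares_two_edges n p q p' q'"
proof -
  have squares: "square_mon ` {..<n} \<subseteq> G"
    using square_mon_mem_if_artinian[OF quad \<open>artinian_mon n G\<close>] by blast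
  have "inj_on square_mon {..<n}"
    by (rule inj_onI) (metis fun_upd_same square_mon_def zero_neq_numeral fun_upd_other)
  then have "card (square_mon ` {..<n}) = n" by (simp add: card_image)
  then have "card (G - square_mon ` {..<n}) = 2"
    using assms(1,2) squares by (simp add: card_Diff_subset finite_subset)
  then obtain g g' where gg': "G - square_mon ` {..<n} = {g, g'}" "g \<noteq> g'"
    by (meson card_2_iff)
  have edge: "\<exists>p q. p \<noteq> q \<and> p < n \<and> q < n \<and> h = prod_mon p q" if "h \<in> {g, g'}" for h
  proof -
    have "h \<in> G" "h \<notin> square_mon ` {..<n}" using that gg'(1) by blast+
    from quad \<open>h \<in> G\<close> have "is_mon n h" "mon_deg n h = 2" by auto
    then show ?thesis using \<open>h \<notin> square_mon ` {..<n}\<close> by (cases rule: quadratic_mon_cases) auto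
  qed
  obtain p q where pq: "p \<noteq> q" "p < n" "q < n" "g = prod_mon p q" using edge[of g] by blast
  obtain p' q' where pq': "p' \<noteq> q'" "p' < n" "q' < n" "g' = prod_mon p' q'" using edge[of g'] by blast
  have "{p, q} \<noteq> {p', q'}"
  proof
    assume "{p, q} = {p', q'}"
    then have "prod_mon p q = prod_mon p' q'" unfolding prod_mon_def by (metis insert_iff singletonD)
    then show False using gg'(2) pq(4) pq'(4) by simp
  qed
  moreover have "G = squares_two_edges n p q p' q'"
    unfolding squares_two_edges_def using gg'(1) squares pq(4) pq'(4) by blast
  ultimately show ?thesis using that pq pq' by blast
qed

lemma squares_two_edges_common_vertex:
  assumes "{p, q} \<noteq> {p', q'}" and "\<not> distinct [p, q, p', q']" and "p \<noteq> q" and "p' \<noteq> q'"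
  obtains x y z where "distinct [x, y, z]" "{x, y, z} \<subseteq> {p, q, p', q'}"
    "squares_two_edges n p q p' q' = squares_two_edges n x y y z"
proof -
  consider "p = p'" | "p = q'" | "q = p'" | "q = q'" using assms(2,3,4) by auto
  then show ?thesis
  proof cases
    case 1
    then show ?thesis using that[of q p q'] assms(1,3,4)
      unfolding squares_two_edges_def by (auto simp: prod_mon_commute)
  next
    case 2
    then show ?thesis using that[of q p p'] assms(1,3,4)
      unfolding squares_two_edges_def by (auto simp: prod_mon_commute)
  next
    case 3
    then show ?thesis using that[of p q q'] assms(1,3,4)
      unfolding squares_two_edges_def by auto
  next
    case 4
    then show ?thesis using that[of p q p'] assms(1,3,4)
      unfolding squares_two_edges_def by (auto simp: prod_mon_commute)
  qed
qed

theorem proposition6p5: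
  fixes n :: nat and G :: "monomial set"
  assumes "odd n" and "n \<ge> 5"
    and "finite G" and "card G = n + 2"
    and "\<forall>g\<in>G. is_mon n g \<and> mon_deg n g = 2"
    and "artinian_mon n G"
  shows "has_WLP TYPE('k::field_char_0) n G"
proof -
  obtain p q p' q' where pq: "p \<noteq> q" "p' \<noteq> q'" "p < n" "q < n" "p' < n" "q' < n" "{p, q} \<noteq> {p', q'}"
    and G: "G = squares_two_edges n p q p' q'"
    using artinian_quadratic_generators[OF assms(3-6)] by blast
  show ?thesis
  proof (cases "distinct [p, q, p', q']")
    case True
    then show ?thesis unfolding G using has_WLP_squares_disjoint_edges pq \<open>odd n\<close> by blast
  next
    case False
    then obtain x y z where "distinct [x, y, z]" "{x, y, z} \<subseteq> {p, q, p', q'}"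
      and "G = squares_two_edges n x y y z"
      using squares_two_edges_common_vertex[OF pq(7) _ pq(1,2)] G by metis
    then show ?thesis using has_WLP_squares_path pq \<open>odd n\<close> by auto
  qed
qed

end
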